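(* Fix a general instance satisfying the unique-default-action assumption, with relevant-action tie-breaking, and a true bias $\alpha^\star\in(0,1]$. Suppose there is a true-bias optimal scheme $\tau^\star$ with $P_{\rm info}^{\alpha^\star}(\tau^\star)=0$. Then there exists $\delta>0$ such that for every interval $J\subseteq(0,1]$ with $\alpha^\star\in J$ and $|J|\le\delta$: - every atom $(p_i,\nu_i,a_i)$ of $\tau^\star$ with $p_i>0$ satisfies $\nu_i\in R_{a_i}^J$; - $\tau^\star$ attains the interval-safe optimum, so that $\mathrm{OPT}^{\rm safe}(J)=\mathrm{OPT}(\alpha^\star)$.
   Context: General model: finite $\Omega$, $A$, full-support prior $\mu_0$, utilities $u_S,u_R$, and $\Delta u_{a,a'}(\omega)=u_R(a,\omega)-u_R(a',\omega)$. A receiver with bias $\alpha$ best-responds to $(1-\alpha)\mu_0+\alpha\nu$. Action regions. For $\alpha\in(0,1]$: $b_{a,a'}(\alpha)=\frac{\alpha-1}{\alpha}\Delta u_{a,a'}^\top\mu_0$ and $R_a^\alpha=\{\nu\in\Delta(\Omega):\Delta u_{a,a'}^\top\nu\ge b_{a,a'}(\alpha)\ \forall a'\neq a\}$. For $J=[\underline\alpha,\overline\alpha]\subseteq(0,1]$: $b_{a,a'}(J)=\max\{b_{a,a'}(\underline\alpha),b_{a,a'}(\overline\alpha)\}$, $R_a^J$ is defined as $R_a^\alpha$ with $b_{a,a'}(J)$, and $\mathrm{int}_{IC}(R_a^J)$ uses strict inequalities. Relevant actions: $A_{\rm rel}$ is the set of actions that are the unique receiver best response at $\alpha^\star$ for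 some posterior. Tie-breaking: never outside $A_{\rm rel}$, and sender-favorable among relevant ties. Unique default action $a_0$ at the prior. Schemes. A scheme is a finite list of triples $(p_i,\nu_i,a_i)$ with $\sum p_i=1$, $p_i\ge0$, $\sum p_i\nu_i=\mu_0$, and value $\sum_i p_i\sum_\omega\nu_i(\omega)u_S(a_i,\omega)$. - $\mathrm{OPT}(\alpha^\star)$ is the supremum of values over schemes with $a_i\in A_{\rm rel}$ and $\nu_i\in R_{a_i}^{\alpha^\star}$; a true-bias optimal scheme attains it. - $\mathrm{OPT}^{\rm safe}(J)$ is the supremum over schemes with $\nu_i\in R_{a_i}^J$ and $\mathrm{int}_{IC}(R_{a_i}^J)\ne\emptyset$. Informative mass. A pair $(a,a')$ is movable if $\Delta u_{a,a'}^\top\mu_0\neq0$. $P^{\alpha^\star}_{\rm info}(\tau)$ is the total mass of atoms with $\Delta u_{a_i,a'}^\top\nu_i=b_{a_i,a'}(\alpha^\star)$ for some movable pair $(a_i,a')$. *)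

theory Defs
  imports Main "HOL-Library.Library"
begin

type_synonym ('w, 'a) scheme = "(real \<times> ('w \<Rightarrow> real) \<times> 'a) list"

definition dot :: "('w::finite \<Rightarrow> real) \<Rightarrow> ('w \<Rightarrow> real) \<Rightarrow> real" where
  "dot f g = (\<Sum>w\<in>UNIV. f w * g w)"

definition simplex :: "('w::finite \<Rightarrow> real) set" where
  "simplex = {\<nu>. (\<forall>w. 0 \<le> \<nu> w) \<and> (\<Sum>w\<in>UNIV. \<nu> w) = 1}"

definition dU :: "('a \<Rightarrow> 'w \<Rightarrow> real) \<Rightarrow> 'a \<Rightarrow> 'a \<Rightarrow> 'w \<Rightarrow> real" where
  "dU uR a a' w = uR a w - uR a' w"

definition BR :: "('a \<Rightarrow> 'w::finite \<Rightarrow> real) \<Rightarrow> ('w \<Rightarrow> real) \<Rightarrow> 'a set" where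
  "BR uR q = {a. \<forall>a'. dot (uR a') q \<le> dot (uR a) q}"

definition biased :: "('w \<Rightarrow> real) \<Rightarrow> real \<Rightarrow> ('w \<Rightarrow> real) \<Rightarrow> 'w \<Rightarrow> real" where
  "biased mu0 \<alpha> \<nu> w = (1 - \<alpha>) * mu0 w + \<alpha> * \<nu> w"

definition bnd :: "('a \<Rightarrow> 'w::finite \<Rightarrow> real) \<Rightarrow> ('w \<Rightarrow> real) \<Rightarrow> 'a \<Rightarrow> 'a \<Rightarrow> real \<Rightarrow> real" where
  "bnd uR mu0 a a' \<alpha> = ((\<alpha> - 1) / \<alpha>) * dot (dU uR a a') mu0"

definition region :: "('a \<Rightarrow> 'w::finite \<Rightarrow> real) \<Rightarrow> ('w \<Rightarrow> real) \<Rightarrow> 'a \<Rightarrow> real \<Rightarrow> ('w \<Rightarrow> real) set" where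
  "region uR mu0 a \<alpha> = {\<nu>\<in>simplex. \<forall>a'. a' \<noteq> a \<longrightarrow> bnd uR mu0 a a' \<alpha> \<le> dot (dU uR a a') \<nu>}"

definition bndJ :: "('a \<Rightarrow> 'w::finite \<Rightarrow> real) \<Rightarrow> ('w \<Rightarrow> real) \<Rightarrow> 'a \<Rightarrow> 'a \<Rightarrow> real \<Rightarrow> real \<Rightarrow> real" where
  "bndJ uR mu0 a a' lo hi = max (bnd uR mu0 a a' lo) (bnd uR mu0 a a' hi)"

definition regionJ :: "('a \<Rightarrow> 'w::finite \<Rightarrow> real) \<Rightarrow> ('w \<Rightarrow> real) \<Rightarrow> 'a \<Rightarrow> real \<Rightarrow> real \<Rightarrow> ('w \<Rightarrow> real) set" where
  "regionJ uR mu0 a lo hi = {\<nu>\<in>simplex. \<forall>a'. a' \<noteq> a \<longrightarrow> bndJ uR mu0 a a' lo hi \<le> dot (dU uR a a') \<nu>}"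

definition intIC_J :: "('a \<Rightarrow> 'w::finite \<Rightarrow> real) \<Rightarrow> ('w \<Rightarrow> real) \<Rightarrow> 'a \<Rightarrow> real \<Rightarrow> real \<Rightarrow> ('w \<Rightarrow> real) set" where
  "intIC_J uR mu0 a lo hi = {\<nu>\<in>simplex. \<forall>a'. a' \<noteq> a \<longrightarrow> bndJ uR mu0 a a' lo hi < dot (dU uR a a') \<nu>}"

definition A_rel :: "('a \<Rightarrow> 'w::finite \<Rightarrow> real) \<Rightarrow> ('w \<Rightarrow> real) \<Rightarrow> real \<Rightarrow> 'a set" where
  "A_rel uR mu0 \<alpha>s = {a. \<exists>\<nu>\<in>simplex. BR uR (biased mu0 \<alpha>s \<nu>) = {a}}"

definition is_scheme :: "('w::finite \<Rightarrow> real) \<Rightarrow> ('w, 'a) scheme \<Rightarrow> bool" where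
  "is_scheme mu0 \<tau> \<longleftrightarrow>
     (\<forall>(p, \<nu>, a) \<in> set \<tau>. 0 \<le> p \<and> \<nu> \<in> simplex) \<and>
     sum_list (map fst \<tau>) = 1 \<and>
     (\<forall>w. sum_list (map (\<lambda>(p, \<nu>, a). p * \<nu> w) \<tau>) = mu0 w)"

definition svalue :: "('a \<Rightarrow> 'w::finite \<Rightarrow> real) \<Rightarrow> ('w, 'a) scheme \<Rightarrow> real" where
  "svalue uS \<tau> = sum_list (map (\<lambda>(p, \<nu>, a). p * (\<Sum>w\<in>UNIV. \<nu> w * uS a w)) \<tau>)"

definition feasible_true :: "('a \<Rightarrow> 'w::finite \<Rightarrow> real) \<Rightarrow> ('w \<Rightarrow> real) \<Rightarrow> real \<Rightarrow> ('w, 'a) scheme \<Rightarrow> bool" where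
  "feasible_true uR mu0 \<alpha>s \<tau> \<longleftrightarrow> is_scheme mu0 \<tau> \<and>
     (\<forall>(p, \<nu>, a) \<in> set \<tau>. a \<in> A_rel uR mu0 \<alpha>s \<and> \<nu> \<in> region uR mu0 a \<alpha>s)"

definition OPT :: "('a \<Rightarrow> 'w::finite \<Rightarrow> real) \<Rightarrow> ('a \<Rightarrow> 'w \<Rightarrow> real) \<Rightarrow> ('w \<Rightarrow> real) \<Rightarrow> real \<Rightarrow> real" where
  "OPT uS uR mu0 \<alpha>s = Sup (svalue uS ` {\<tau>. feasible_true uR mu0 \<alpha>s \<tau>})"

definition true_bias_optimal :: "('a \<Rightarrow> 'w::finite \<Rightarrow> real) \<Rightarrow> ('a \<Rightarrow> 'w \<Rightarrow> real) \<Rightarrow> ('w \<Rightarrow> real) \<Rightarrow> real \<Rightarrow> ('w, 'a) scheme \<Rightarrow> bool" where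
  "true_bias_optimal uS uR mu0 \<alpha>s \<tau> \<longleftrightarrow>
     feasible_true uR mu0 \<alpha>s \<tau> \<and> svalue uS \<tau> = OPT uS uR mu0 \<alpha>s"

definition feasible_safe :: "('a \<Rightarrow> 'w::finite \<Rightarrow> real) \<Rightarrow> ('w \<Rightarrow> real) \<Rightarrow> real \<Rightarrow> real \<Rightarrow> ('w, 'a) scheme \<Rightarrow> bool" where
  "feasible_safe uR mu0 lo hi \<tau> \<longleftrightarrow> is_scheme mu0 \<tau> \<and>
     (\<forall>(p, \<nu>, a) \<in> set \<tau>. \<nu> \<in> regionJ uR mu0 a lo hi \<and> intIC_J uR mu0 a lo hi \<noteq> {})"

definition OPT_safe :: "('a \<Rightarrow> 'w::finite \<Rightarrow> real) \<Rightarrow> ('a \<Rightarrow> 'w \<Rightarrow> real) \<Rightarrow> ('w \<Rightarrow> real) \<Rightarrow> real \<Rightarrow> real \<Rightarrow> real" where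
  "OPT_safe uS uR mu0 lo hi = Sup (svalue uS ` {\<tau>. feasible_safe uR mu0 lo hi \<tau>})"

definition movable :: "('a \<Rightarrow> 'w::finite \<Rightarrow> real) \<Rightarrow> ('w \<Rightarrow> real) \<Rightarrow> 'a \<Rightarrow> 'a \<Rightarrow> bool" where
  "movable uR mu0 a a' \<longleftrightarrow> dot (dU uR a a') mu0 \<noteq> 0"

definition P_info :: "('a \<Rightarrow> 'w::finite \<Rightarrow> real) \<Rightarrow> ('w \<Rightarrow> real) \<Rightarrow> real \<Rightarrow> ('w, 'a) scheme \<Rightarrow> real" where
  "P_info uR mu0 \<alpha>s \<tau> = sum_list (map (\<lambda>(p, \<nu>, a).
      if (\<exists>a'. movable uR mu0 a a' \<and> dot (dU uR a a') \<nu> = bnd uR mu0 a a' \<alpha>s) then p else 0) \<tau>)"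

end

theory Submission
  imports Defs
begin

text \<open>
  Since \<open>P_info = 0\<close>, every constraint \<open>(a, a')\<close> of a positive-mass atom of the optimal scheme
  whose threshold \<open>b_{a,a'}(\<alpha>)\<close> moves with \<open>\<alpha>\<close> is slack at the true bias; the thresholds of
  non-movable pairs vanish identically. As \<open>b_{a,a'}\<close> is continuous, finitely many slack constraints
  survive on a neighbourhood of \<open>\<alpha>\<^sup>\<star>\<close>, and so do the strict best-response posteriors witnessing
  that an action is relevant. Conversely \<open>b_{a,a'}(\<alpha>) = (1 - 1/\<alpha>) \<Delta>u\<^sup>T\<mu>\<^sub>0\<close> is monotone in \<open>\<alpha>\<close>, so
  \<open>b(\<alpha>\<^sup>\<star>) \<le> b(J)\<close>: every interval-safe scheme is feasible at the true bias, and its value is at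
  most \<open>OPT(\<alpha>\<^sup>\<star>)\<close>, which the optimal scheme attains.
\<close>

lemma dot_dU: "dot (dU uR a a') q = dot (uR a) q - dot (uR a') q"
  unfolding dot_def dU_def by (simp add: left_diff_distrib sum_subtractf)

lemma dot_biased: "dot f (biased mu0 \<alpha> \<nu>) = (1 - \<alpha>) * dot f mu0 + \<alpha> * dot f \<nu>"
  unfolding dot_def biased_def
  by (simp add: distrib_left sum.distrib sum_distrib_left mult.left_commute)

lemma BR_eq_singleton_iff:
  "BR uR q = {a} \<longleftrightarrow> (\<forall>a'. a' \<noteq> a \<longrightarrow> dot (uR a') q < dot (uR a) q)"
proof
  assume BR: "BR uR q = {a}"
  show "\<forall>a'. a' \<noteq> a \<longrightarrow> dot (uR a') q < dot (uR a) q"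
  proof (intro allI impI)
    fix a' assume "a' \<noteq> a"
    with BR have "a' \<notin> BR uR q" by simp
    then obtain b where "dot (uR a') q < dot (uR b) q" by (auto simp: BR_def not_le)
    moreover have "dot (uR b) q \<le> dot (uR a) q" using BR by (auto simp: BR_def)
    ultimately show "dot (uR a') q < dot (uR a) q" by linarith
  qed
next
  assume strict: "\<forall>a'. a' \<noteq> a \<longrightarrow> dot (uR a') q < dot (uR a) q"
  then have "a \<in> BR uR q" by (auto simp: BR_def less_imp_le)
  moreover have "b = a" if "b \<in> BR uR q" for b
    using that strict by (auto simp: BR_def) (meson not_le)
  ultimately show "BR uR q = {a}" by blast
qed

lemma bnd_less_iff_biased:
  assumes "0 < \<alpha>"
  shows "bnd uR mu0 a a' \<alpha> < dot (dU uR a a') \<nu> \<longleftrightarrow>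
         dot (uR a') (biased mu0 \<alpha> \<nu>) < dot (uR a) (biased mu0 \<alpha> \<nu>)"
proof -
  let ?c = "dot (dU uR a a') mu0" and ?d = "dot (dU uR a a') \<nu>"
  have "bnd uR mu0 a a' \<alpha> < ?d \<longleftrightarrow> (\<alpha> - 1) * ?c < \<alpha> * ?d"
    using assms by (simp add: bnd_def pos_divide_less_eq mult.commute)
  also have "\<dots> \<longleftrightarrow> 0 < dot (dU uR a a') (biased mu0 \<alpha> \<nu>)"
    by (simp add: dot_biased algebra_simps)
  finally show ?thesis by (simp add: dot_dU)
qed

lemma intIC_J_point:
  "intIC_J uR mu0 a \<alpha> \<alpha> =
     {\<nu>\<in>simplex. \<forall>a'. a' \<noteq> a \<longrightarrow> bnd uR mu0 a a' \<alpha> < dot (dU uR a a') \<nu>}"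
  by (simp add: intIC_J_def bndJ_def)

lemma intIC_J_eq_Int:
  "intIC_J uR mu0 a lo hi = intIC_J uR mu0 a lo lo \<inter> intIC_J uR mu0 a hi hi"
  by (auto simp: intIC_J_def bndJ_def)

lemma regionJ_eq_Int:
  "regionJ uR mu0 a lo hi = region uR mu0 a lo \<inter> region uR mu0 a hi"
  by (auto simp: regionJ_def region_def bndJ_def)

lemma A_rel_iff_intIC_J_ne:
  assumes "0 < \<alpha>"
  shows "a \<in> A_rel uR mu0 \<alpha> \<longleftrightarrow> intIC_J uR mu0 a \<alpha> \<alpha> \<noteq> {}"
  unfolding A_rel_def intIC_J_point BR_eq_singleton_iff bnd_less_iff_biased[OF assms] by blast

lemma bnd_le_bndJ:
  assumes "0 < lo" "lo \<le> \<alpha>" "\<alpha> \<le> hi"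
  shows "bnd uR mu0 a a' \<alpha> \<le> bndJ uR mu0 a a' lo hi"
proof -
  have mono: "(lo - 1) / lo \<le> (\<alpha> - 1) / \<alpha>" "(\<alpha> - 1) / \<alpha> \<le> (hi - 1) / hi"
    using assms by (simp_all add: field_simps)
  define c where "c = dot (dU uR a a') mu0"
  have "(\<alpha> - 1) / \<alpha> * c \<le> max ((lo - 1) / lo * c) ((hi - 1) / hi * c)"
  proof (cases "0 \<le> c")
    case True
    with mult_right_mono[OF mono(2), of c] show ?thesis by simp
  next
    case False
    with mult_right_mono_neg[OF mono(1), of c] show ?thesis by simp
  qed
  then show ?thesis by (simp add: bndJ_def bnd_def c_def)
qed

lemma regionJ_subset_region:
  assumes "0 < lo" "lo \<le> \<alpha>" "\<alpha> \<le> hi"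
  shows "regionJ uR mu0 a lo hi \<subseteq> region uR mu0 a \<alpha>"
  unfolding regionJ_def region_def by (auto intro: order_trans[OF bnd_le_bndJ[OF assms]])

lemma intIC_J_subset_point:
  assumes "0 < lo" "lo \<le> \<alpha>" "\<alpha> \<le> hi"
  shows "intIC_J uR mu0 a lo hi \<subseteq> intIC_J uR mu0 a \<alpha> \<alpha>"
  unfolding intIC_J_point by (auto simp: intIC_J_def intro: le_less_trans[OF bnd_le_bndJ[OF assms]])

lemma feasible_safe_imp_feasible_true:
  assumes "0 < lo" "lo \<le> \<alpha>" "\<alpha> \<le> hi" "feasible_safe uR mu0 lo hi \<tau>"
  shows "feasible_true uR mu0 \<alpha> \<tau>"
proof -
  have "a \<in> A_rel uR mu0 \<alpha> \<and> \<nu> \<in> region uR mu0 a \<alpha>" if "(p, \<nu>, a) \<in> set \<tau>" for p \<nu> a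
  proof
    have "\<forall>(p, \<nu>, a)\<in>set \<tau>. \<nu> \<in> regionJ uR mu0 a lo hi \<and> intIC_J uR mu0 a lo hi \<noteq> {}"
      using assms(4) by (simp add: feasible_safe_def)
    with that have safe: "\<nu> \<in> regionJ uR mu0 a lo hi" "intIC_J uR mu0 a lo hi \<noteq> {}" by auto
    from safe(2) intIC_J_subset_point[OF assms(1-3), of uR mu0 a]
    have "intIC_J uR mu0 a \<alpha> \<alpha> \<noteq> {}" by blast
    then show "a \<in> A_rel uR mu0 \<alpha>" using assms(1,2) by (simp add: A_rel_iff_intIC_J_ne)
    show "\<nu> \<in> region uR mu0 a \<alpha>"
      using safe(1) regionJ_subset_region[OF assms(1-3), of uR mu0 a] by blast
  qed
  then show ?thesis using assms(4) by (auto simp: feasible_true_def feasible_safe_def)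
qed

lemma expectation_le_sum_abs:
  fixes f :: "'w::finite \<Rightarrow> real"
  assumes "\<nu> \<in> simplex"
  shows "(\<Sum>w\<in>UNIV. \<nu> w * f w) \<le> (\<Sum>w\<in>UNIV. \<bar>f w\<bar>)"
proof (rule sum_mono)
  fix w
  have "\<nu> w \<le> (\<Sum>w\<in>UNIV. \<nu> w)"
    by (rule member_le_sum) (use assms in \<open>auto simp: simplex_def\<close>)
  then have "0 \<le> \<nu> w" "\<nu> w \<le> 1" using assms by (auto simp: simplex_def)
  then have "\<nu> w * f w \<le> \<nu> w * \<bar>f w\<bar>" by (simp add: mult_left_mono)
  also have "\<dots> \<le> \<bar>f w\<bar>"
    by (rule mult_left_le_one_le) (simp_all add: \<open>0 \<le> \<nu> w\<close> \<open>\<nu> w \<le> 1\<close>)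
  finally show "\<nu> w * f w \<le> \<bar>f w\<bar>" .
qed

lemma svalue_le_sum_abs:
  fixes uS :: "'a::finite \<Rightarrow> 'w::finite \<Rightarrow> real"
  assumes "is_scheme mu0 \<tau>"
  shows "svalue uS \<tau> \<le> (\<Sum>a\<in>UNIV. \<Sum>w\<in>UNIV. \<bar>uS a w\<bar>)" (is "_ \<le> ?K")
proof -
  have value_le: "(\<Sum>w\<in>UNIV. \<nu> w * uS a w) \<le> ?K" if "\<nu> \<in> simplex" for \<nu> a
    using expectation_le_sum_abs[OF that, of "uS a"]
      member_le_sum[of a UNIV "\<lambda>a. \<Sum>w\<in>UNIV. \<bar>uS a w\<bar>"] by (simp add: sum_nonneg)
  have "svalue uS \<tau> \<le> (\<Sum>x\<leftarrow>\<tau>. fst x * ?K)"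
    unfolding svalue_def
  proof (rule sum_list_mono)
    fix x assume "x \<in> set \<tau>"
    moreover obtain p \<nu> a where x: "x = (p, \<nu>, a)" by (cases x)
    ultimately have "0 \<le> p" "\<nu> \<in> simplex" using assms by (auto simp: is_scheme_def)
    then show "(case x of (p, \<nu>, a) \<Rightarrow> p * (\<Sum>w\<in>UNIV. \<nu> w * uS a w)) \<le> fst x * ?K"
      using x value_le by (simp add: mult.commute mult_left_mono)
  qed
  also have "\<dots> = ?K"
    using assms by (simp add: sum_list_mult_const is_scheme_def)
  finally show ?thesis .
qed

lemma bdd_above_svalue_feasible_true:
  fixes uS uR :: "'a::finite \<Rightarrow> 'w::finite \<Rightarrow> real"
  shows "bdd_above (svalue uS ` {\<tau>. feasible_true uR mu0 \<alpha> \<tau>})"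
  using svalue_le_sum_abs unfolding feasible_true_def bdd_above_def by blast

lemma sum_list_filter_pos_weights:
  fixes \<tau> :: "(real \<times> 'b \<times> 'c) list"
  assumes "\<forall>x\<in>set \<tau>. 0 \<le> fst x" "\<And>x. fst x = 0 \<Longrightarrow> f x = (0::real)"
  shows "sum_list (map f (filter (\<lambda>(p, \<nu>, a). 0 < p) \<tau>)) = sum_list (map f \<tau>)"
  using assms by (intro sum_list_map_filter) force

lemma is_scheme_filter_pos:
  assumes "is_scheme mu0 \<tau>"
  shows "is_scheme mu0 (filter (\<lambda>(p, \<nu>, a). 0 < p) \<tau>)"
proof -
  have "\<forall>x\<in>set \<tau>. 0 \<le> fst x" using assms by (auto simp: is_scheme_def)
  note drop_null = sum_list_filter_pos_weights[OF this]
  show ?thesis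
    using assms drop_null[of fst] drop_null[of "\<lambda>(p, \<nu>, a). p * \<nu> w" for w]
    by (auto simp: is_scheme_def)
qed

lemma svalue_filter_pos:
  assumes "is_scheme mu0 \<tau>"
  shows "svalue uS (filter (\<lambda>(p, \<nu>, a). 0 < p) \<tau>) = svalue uS \<tau>"
  using assms unfolding svalue_def
  by (intro sum_list_filter_pos_weights) (auto simp: is_scheme_def)

lemma P_info_zero_imp_slack:
  assumes "is_scheme mu0 \<tau>" "P_info uR mu0 \<alpha> \<tau> = 0"
    and "(p, \<nu>, a) \<in> set \<tau>" "0 < p" "movable uR mu0 a a'"
  shows "dot (dU uR a a') \<nu> \<noteq> bnd uR mu0 a a' \<alpha>"
proof
  assume tight: "dot (dU uR a a') \<nu> = bnd uR mu0 a a' \<alpha>"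
  define mass where "mass = (\<lambda>(p, \<nu>, a). if \<exists>a'. movable uR mu0 a a' \<and>
      dot (dU uR a a') \<nu> = bnd uR mu0 a a' \<alpha> then p else (0::real))"
  have "\<forall>y\<in>set (map mass \<tau>). 0 \<le> y" using assms(1) by (auto simp: is_scheme_def mass_def)
  moreover have "sum_list (map mass \<tau>) = 0" using assms(2) by (simp add: P_info_def mass_def)
  ultimately have "\<forall>y\<in>set (map mass \<tau>). y = 0" using sum_list_nonneg_eq_0_iff by blast
  then have "mass (p, \<nu>, a) = 0" using assms(3) by simp
  moreover have "\<exists>a'. movable uR mu0 a a' \<and> dot (dU uR a a') \<nu> = bnd uR mu0 a a' \<alpha>"
    using tight assms(5) by blast
  ultimately show False using assms(4) by (simp add: mass_def)
qed

lemma eventually_bnd_less: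
  assumes "0 < \<alpha>" "bnd uR mu0 a a' \<alpha> < x"
  shows "eventually (\<lambda>\<beta>. bnd uR mu0 a a' \<beta> < x) (nhds \<alpha>)"
proof -
  have "((\<lambda>\<beta>. bnd uR mu0 a a' \<beta>) \<longlongrightarrow> bnd uR mu0 a a' \<alpha>) (nhds \<alpha>)"
    unfolding bnd_def using assms(1) by (intro tendsto_intros filterlim_ident) auto
  from order_tendstoD(2)[OF this assms(2)] show ?thesis .
qed

lemma eventually_in_region:
  fixes uR :: "'a::finite \<Rightarrow> 'w::finite \<Rightarrow> real"
  assumes "0 < \<alpha>" "\<nu> \<in> region uR mu0 a \<alpha>"
    and slack: "\<And>a'. movable uR mu0 a a' \<Longrightarrow> dot (dU uR a a') \<nu> \<noteq> bnd uR mu0 a a' \<alpha>"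
  shows "eventually (\<lambda>\<beta>. \<nu> \<in> region uR mu0 a \<beta>) (nhds \<alpha>)"
proof -
  have "eventually (\<lambda>\<beta>. a' \<noteq> a \<longrightarrow> bnd uR mu0 a a' \<beta> \<le> dot (dU uR a a') \<nu>) (nhds \<alpha>)" for a'
  proof (cases "movable uR mu0 a a'")
    case True
    show ?thesis
    proof (cases "a' = a")
      case False
      with True slack assms(2) have "bnd uR mu0 a a' \<alpha> < dot (dU uR a a') \<nu>"
        by (fastforce simp: region_def)
      from eventually_bnd_less[OF assms(1) this] show ?thesis by (rule eventually_mono) simp
    qed simp
  next
    case False
    then have "bnd uR mu0 a a' \<beta> = 0" for \<beta> by (simp add: movable_def bnd_def)
    then show ?thesis using assms(2) by (intro always_eventually) (auto simp: region_def)
  qed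
  then show ?thesis
    using assms(2) by (auto simp: region_def intro: eventually_all_finite)
qed

lemma eventually_in_intIC_J:
  fixes uR :: "'a::finite \<Rightarrow> 'w::finite \<Rightarrow> real"
  assumes "0 < \<alpha>" "\<nu> \<in> intIC_J uR mu0 a \<alpha> \<alpha>"
  shows "eventually (\<lambda>\<beta>. \<nu> \<in> intIC_J uR mu0 a \<beta> \<beta>) (nhds \<alpha>)"
proof -
  have "eventually (\<lambda>\<beta>. a' \<noteq> a \<longrightarrow> bnd uR mu0 a a' \<beta> < dot (dU uR a a') \<nu>) (nhds \<alpha>)" for a'
  proof (cases "a' = a")
    case False
    with assms(2) have "bnd uR mu0 a a' \<alpha> < dot (dU uR a a') \<nu>" by (simp add: intIC_J_point)
    from eventually_bnd_less[OF assms(1) this] show ?thesis by (rule eventually_mono) simp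
  qed simp
  then show ?thesis
    using assms(2) unfolding intIC_J_point by (auto intro: eventually_all_finite)
qed

lemma safe_regions_near_true_bias:
  fixes uR :: "'a::finite \<Rightarrow> 'w::finite \<Rightarrow> real"
  assumes "0 < \<alpha>" "feasible_true uR mu0 \<alpha> \<tau>" "P_info uR mu0 \<alpha> \<tau> = 0"
  shows "\<exists>\<delta>>0. \<forall>lo hi. \<bar>lo - \<alpha>\<bar> \<le> \<delta> \<longrightarrow> \<bar>hi - \<alpha>\<bar> \<le> \<delta> \<longrightarrow>
           (\<forall>(p, \<nu>, a)\<in>set \<tau>. 0 < p \<longrightarrow> \<nu> \<in> regionJ uR mu0 a lo hi) \<and>
           (\<forall>a\<in>A_rel uR mu0 \<alpha>. intIC_J uR mu0 a lo hi \<noteq> {})"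
proof -
  have scheme: "is_scheme mu0 \<tau>" using assms(2) by (simp add: feasible_true_def)
  have "\<forall>a\<in>A_rel uR mu0 \<alpha>. \<exists>\<nu>. \<nu> \<in> intIC_J uR mu0 a \<alpha> \<alpha>"
    by (auto simp: A_rel_iff_intIC_J_ne[OF assms(1)])
  from bchoice[OF this] obtain \<nu>\<^sub>0
    where \<nu>\<^sub>0: "\<forall>a\<in>A_rel uR mu0 \<alpha>. \<nu>\<^sub>0 a \<in> intIC_J uR mu0 a \<alpha> \<alpha>" ..
  define safe_at where "safe_at \<beta> \<longleftrightarrow>
      (\<forall>(p, \<nu>, a)\<in>set \<tau>. 0 < p \<longrightarrow> \<nu> \<in> region uR mu0 a \<beta>) \<and>
      (\<forall>a\<in>A_rel uR mu0 \<alpha>. \<nu>\<^sub>0 a \<in> intIC_J uR mu0 a \<beta> \<beta>)" for \<beta>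
  have atom_near: "eventually (\<lambda>\<beta>. 0 < p \<longrightarrow> \<nu> \<in> region uR mu0 a \<beta>) (nhds \<alpha>)"
    if "(p, \<nu>, a) \<in> set \<tau>" for p \<nu> a
  proof (cases "0 < p")
    case True
    have "\<nu> \<in> region uR mu0 a \<alpha>" using assms(2) that by (auto simp: feasible_true_def)
    moreover have "dot (dU uR a a') \<nu> \<noteq> bnd uR mu0 a a' \<alpha>" if "movable uR mu0 a a'" for a'
      using P_info_zero_imp_slack[OF scheme assms(3) \<open>(p, \<nu>, a) \<in> set \<tau>\<close> True that] .
    ultimately have "eventually (\<lambda>\<beta>. \<nu> \<in> region uR mu0 a \<beta>) (nhds \<alpha>)"
      by (rule eventually_in_region[OF assms(1)])
    then show ?thesis by (rule eventually_mono) simp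
  qed simp
  have "\<forall>x\<in>set \<tau>. eventually
          (\<lambda>\<beta>. case x of (p, \<nu>, a) \<Rightarrow> 0 < p \<longrightarrow> \<nu> \<in> region uR mu0 a \<beta>) (nhds \<alpha>)"
    using atom_near by (simp add: split_paired_all)
  moreover have "\<forall>a\<in>A_rel uR mu0 \<alpha>. eventually (\<lambda>\<beta>. \<nu>\<^sub>0 a \<in> intIC_J uR mu0 a \<beta> \<beta>) (nhds \<alpha>)"
    using \<nu>\<^sub>0 eventually_in_intIC_J[OF assms(1)] by blast
  ultimately have "eventually safe_at (nhds \<alpha>)"
    unfolding safe_at_def by (intro eventually_conj eventually_ball_finite) simp_all
  then obtain d where "d > 0" and near: "\<And>\<beta>. \<bar>\<beta> - \<alpha>\<bar> < d \<Longrightarrow> safe_at \<beta>"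
    unfolding eventually_nhds_metric dist_real_def by blast
  show ?thesis
  proof (intro exI[of _ "d / 2"] conjI allI impI)
    show "0 < d / 2" using \<open>d > 0\<close> by simp
    fix lo hi assume "\<bar>lo - \<alpha>\<bar> \<le> d / 2" "\<bar>hi - \<alpha>\<bar> \<le> d / 2"
    then have lo: "safe_at lo" and hi: "safe_at hi" using \<open>d > 0\<close> by (simp_all add: near)
    then show "\<forall>(p, \<nu>, a)\<in>set \<tau>. 0 < p \<longrightarrow> \<nu> \<in> regionJ uR mu0 a lo hi"
      by (auto simp: safe_at_def regionJ_eq_Int)
    show "\<forall>a\<in>A_rel uR mu0 \<alpha>. intIC_J uR mu0 a lo hi \<noteq> {}"
    proof
      fix a assume "a \<in> A_rel uR mu0 \<alpha>"
      \<comment> \<open>instantiated, since the general equation rewrites its own right-hand side forever\<close>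
      with lo hi have "\<nu>\<^sub>0 a \<in> intIC_J uR mu0 a lo hi"
        unfolding intIC_J_eq_Int[of uR mu0 a lo hi] by (simp add: safe_at_def)
      then show "intIC_J uR mu0 a lo hi \<noteq> {}" by blast
    qed
  qed
qed

lemma feasible_safe_filter_pos:
  assumes "feasible_true uR mu0 \<alpha> \<tau>"
    and "\<forall>(p, \<nu>, a)\<in>set \<tau>. 0 < p \<longrightarrow> \<nu> \<in> regionJ uR mu0 a lo hi"
    and "\<forall>a\<in>A_rel uR mu0 \<alpha>. intIC_J uR mu0 a lo hi \<noteq> {}"
  shows "feasible_safe uR mu0 lo hi (filter (\<lambda>(p, \<nu>, a). 0 < p) \<tau>)"
proof -
  have "is_scheme mu0 \<tau>" "\<forall>(p, \<nu>, a)\<in>set \<tau>. a \<in> A_rel uR mu0 \<alpha>"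
    using assms(1) by (auto simp: feasible_true_def)
  then show ?thesis
    using is_scheme_filter_pos assms(2,3) unfolding feasible_safe_def by auto
qed

lemma OPT_safe_eq_OPT:
  fixes uS uR :: "'a::finite \<Rightarrow> 'w::finite \<Rightarrow> real"
  assumes "0 < lo" "lo \<le> \<alpha>" "\<alpha> \<le> hi"
    and "true_bias_optimal uS uR mu0 \<alpha> \<tau>"
    and "feasible_safe uR mu0 lo hi \<tau>'" "svalue uS \<tau>' = svalue uS \<tau>"
  shows "OPT_safe uS uR mu0 lo hi = OPT uS uR mu0 \<alpha>"
  unfolding OPT_safe_def
proof (rule cSup_eq_maximum)
  have "OPT uS uR mu0 \<alpha> = svalue uS \<tau>'"
    using assms(4,6) by (simp add: true_bias_optimal_def)
  with assms(5) show "OPT uS uR mu0 \<alpha> \<in> svalue uS ` {\<tau>. feasible_safe uR mu0 lo hi \<tau>}"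
    by blast
  fix x assume "x \<in> svalue uS ` {\<tau>. feasible_safe uR mu0 lo hi \<tau>}"
  then obtain \<sigma> where "feasible_safe uR mu0 lo hi \<sigma>" "x = svalue uS \<sigma>" by blast
  then have "feasible_true uR mu0 \<alpha> \<sigma>" "x = svalue uS \<sigma>"
    using feasible_safe_imp_feasible_true[OF assms(1-3)] by blast+
  then show "x \<le> OPT uS uR mu0 \<alpha>"
    unfolding OPT_def by (simp add: cSup_upper bdd_above_svalue_feasible_true)
qed

theorem mainTheorem7:
  fixes uS uR :: "'a::finite \<Rightarrow> 'w::finite \<Rightarrow> real"
    and mu0 :: "'w \<Rightarrow> real"
    and \<alpha>s :: real
    and \<tau>s :: "('w, 'a) scheme"
  assumes prior_pos: "\<forall>w. 0 < mu0 w"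
    and prior_sum: "(\<Sum>w\<in>UNIV. mu0 w) = 1"
    and unique_default: "\<exists>a0. BR uR mu0 = {a0}"
    and alpha_pos: "0 < \<alpha>s" and alpha_le: "\<alpha>s \<le> 1"
    and opt: "true_bias_optimal uS uR mu0 \<alpha>s \<tau>s"
    and noinfo: "P_info uR mu0 \<alpha>s \<tau>s = 0"
  shows "\<exists>\<delta>>0. \<forall>lo hi. 0 < lo \<longrightarrow> lo \<le> hi \<longrightarrow> hi \<le> 1 \<longrightarrow> lo \<le> \<alpha>s \<longrightarrow> \<alpha>s \<le> hi \<longrightarrow> hi - lo \<le> \<delta> \<longrightarrow>
           (\<forall>(p, \<nu>, a) \<in> set \<tau>s. 0 < p \<longrightarrow> \<nu> \<in> regionJ uR mu0 a lo hi)
         \<and> feasible_safe uR mu0 lo hi (filter (\<lambda>(p, \<nu>, a). 0 < p) \<tau>s)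
         \<and> svalue uS \<tau>s = OPT_safe uS uR mu0 lo hi
         \<and> OPT_safe uS uR mu0 lo hi = OPT uS uR mu0 \<alpha>s"
proof -
  have feasible: "feasible_true uR mu0 \<alpha>s \<tau>s"
    and opt_value: "svalue uS \<tau>s = OPT uS uR mu0 \<alpha>s"
    using opt by (simp_all add: true_bias_optimal_def)
  obtain \<delta> where "\<delta> > 0" and near: "\<forall>lo hi. \<bar>lo - \<alpha>s\<bar> \<le> \<delta> \<longrightarrow> \<bar>hi - \<alpha>s\<bar> \<le> \<delta> \<longrightarrow>
      (\<forall>(p, \<nu>, a)\<in>set \<tau>s. 0 < p \<longrightarrow> \<nu> \<in> regionJ uR mu0 a lo hi) \<and>
      (\<forall>a\<in>A_rel uR mu0 \<alpha>s. intIC_J uR mu0 a lo hi \<noteq> {})"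
    using safe_regions_near_true_bias[OF alpha_pos feasible noinfo] by blast
  show ?thesis
  proof (intro exI[of _ \<delta>] conjI allI impI \<open>\<delta> > 0\<close>)
    fix lo hi assume "0 < lo" "lo \<le> hi" "hi \<le> 1" "lo \<le> \<alpha>s" "\<alpha>s \<le> hi" "hi - lo \<le> \<delta>"
    then have "\<bar>lo - \<alpha>s\<bar> \<le> \<delta>" "\<bar>hi - \<alpha>s\<bar> \<le> \<delta>" by auto
    with near show in_regionJ: "\<forall>(p, \<nu>, a)\<in>set \<tau>s. 0 < p \<longrightarrow> \<nu> \<in> regionJ uR mu0 a lo hi"
      by blast
    from \<open>\<bar>lo - \<alpha>s\<bar> \<le> \<delta>\<close> \<open>\<bar>hi - \<alpha>s\<bar> \<le> \<delta>\<close> near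
    have "\<forall>a\<in>A_rel uR mu0 \<alpha>s. intIC_J uR mu0 a lo hi \<noteq> {}" by blast
    with feasible in_regionJ
    show safe: "feasible_safe uR mu0 lo hi (filter (\<lambda>(p, \<nu>, a). 0 < p) \<tau>s)"
      by (rule feasible_safe_filter_pos)
    have "svalue uS (filter (\<lambda>(p, \<nu>, a). 0 < p) \<tau>s) = svalue uS \<tau>s"
      using feasible by (intro svalue_filter_pos[of mu0]) (simp add: feasible_true_def)
    from OPT_safe_eq_OPT[OF \<open>0 < lo\<close> \<open>lo \<le> \<alpha>s\<close> \<open>\<alpha>s \<le> hi\<close> opt safe this]
    show "OPT_safe uS uR mu0 lo hi = OPT uS uR mu0 \<alpha>s" .
    with opt_value show "svalue uS \<tau>s = OPT_safe uS uR mu0 lo hi" by simp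
  qed
qed

end
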